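(* Let $q>2$, $\sigma,B,K>0$, and let $X_1,\dots,X_n$ be independent mean-zero real-valued random variables with \[ \frac1n\sum_{i=1}^n\mathrm{Var}[X_i]\le\sigma^2,\qquad\frac1n\sum_{i=1}^n\mathbb{E}[|X_i|^q]\le B^q,\qquad\max_{1\le i\le n}|X_i|\le K\ \text{a.s.} \] Then for every $z>1$, \[ \mathbb{P}\Big(\frac1n\sum_{i=1}^nX_i\ge B\Big(\frac{\sigma^2}{B^2}\Big)^{\frac{q-1}{q-2}}\Psi^{-1}\Big[\Big(\frac{B^2}{\sigma^2}\Big)^{\frac q{q-2}}\frac{\ln z}n\Big]+\frac{B^q}{K^{q-1}}\Psi^{-1}\Big[\Big(\frac KB\Big)^q\frac{\ln z}n\Big]\Big)\le\frac1z. \]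
   Context: $\Psi(x)=(1+x)\ln(1+x)-x$ for $x\ge0$, and $\Psi^{-1}$ is its inverse on $[0,\infty)$. *)

theory Defs
  imports "HOL-Probability.Probability"
begin

definition Psi :: "real \<Rightarrow> real" where
  "Psi x = (1 + x) * ln (1 + x) - x"

definition Psi_inv :: "real \<Rightarrow> real" where
  "Psi_inv y = (THE x. 0 \<le> x \<and> Psi x = y)"

end

theory Submission
  imports Defs
begin

(* Chernoff's method. Write phi(u) = exp u - 1 - u. For |x| <= K, the Taylor terms of phi(lambda x)
   of order 2 <= k <= q are split between x^2 and |x|^q by weighted AM-GM, and those of order k > q
   are dominated by |x|^q K^(k-q). With the scale c chosen so that sigma^2 c^(q-2) = B^q, each split
   term costs exactly (sigma^2/c^2) (lambda c)^k / k! after averaging over i, whence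
     (1/n) ln E exp(lambda S_n) <= (sigma^2/c^2) phi(lambda c) + (B^q/K^q) phi(lambda K),
   a sum of two Bennett exponents. As Psi is the Legendre transform of phi, each exponent alone
   yields a Bennett threshold involving Psi^-1; taking lambda to be the smaller of the two optimal
   values and using phi(a) <= (a/b) phi(b) for 0 <= a <= b, the two thresholds add up. *)

definition bennett_phi :: "real \<Rightarrow> real" where
  "bennett_phi u = exp u - 1 - u"

definition exp_remainder :: "nat \<Rightarrow> real \<Rightarrow> real" where
  "exp_remainder m u = exp u - (\<Sum>i<m. u^i / fact i)"

lemma exp_remainder_sums: "(\<lambda>i. u^(i+m) / fact (i+m)) sums exp_remainder m u"
proof -
  have "(\<lambda>i. u^i / fact i) sums exp u"
    using exp_converges[of u] by (simp add: divide_inverse mult.commute)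
  then show ?thesis
    unfolding exp_remainder_def by (subst sums_iff_shift[where f="\<lambda>i. u^i / fact i"]) simp
qed

lemma exp_remainder_le_abs: "exp_remainder m u \<le> exp_remainder m \<bar>u\<bar>"
proof (rule sums_le[OF _ exp_remainder_sums exp_remainder_sums])
  show "u^(i+m) / fact (i+m) \<le> \<bar>u\<bar>^(i+m) / fact (i+m)" for i
    using abs_ge_self[of "u^(i+m)"] by (intro divide_right_mono) (simp_all add: power_abs)
qed

lemma exp_remainder_nonneg: "0 \<le> u \<Longrightarrow> 0 \<le> exp_remainder m u"
  by (rule sums_le[OF _ sums_zero exp_remainder_sums]) simp

lemma exp_remainder_0: "0 < m \<Longrightarrow> exp_remainder m 0 = 0"
  by (cases m) (simp_all only: exp_remainder_def sum.lessThan_Suc_shift, simp_all)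

lemma exp_remainder_le_ratio_pow:
  assumes "0 \<le> s" "s \<le> u" "0 < u"
  shows "exp_remainder m s \<le> (s/u)^m * exp_remainder m u"
proof (rule sums_le[OF _ exp_remainder_sums sums_mult[OF exp_remainder_sums]])
  fix i
  have "s^(i+m) = (s/u)^(i+m) * u^(i+m)"
    using assms by (simp add: power_divide)
  also have "\<dots> \<le> (s/u)^m * u^(i+m)"
    using assms by (intro mult_right_mono power_decreasing) auto
  finally have "s^(i+m) / fact (i+m) \<le> ((s/u)^m * u^(i+m)) / fact (i+m)"
    by (rule divide_right_mono) simp
  then show "s^(i+m) / fact (i+m) \<le> (s/u)^m * (u^(i+m) / fact (i+m))"
    by (simp only: times_divide_eq_right)
qed

lemma exp_remainder_le_powr:
  assumes "0 \<le> lam" "0 \<le> t" "t \<le> K" "0 < K" "0 < q" "q \<le> real m"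
  shows "exp_remainder m (lam*t) \<le> exp_remainder m (lam*K) / K powr q * t powr q"
proof (cases "lam * t = 0")
  case True
  have "0 < m" using assms by linarith
  then have "exp_remainder m (lam*t) = 0" by (simp add: True exp_remainder_0)
  moreover have "0 \<le> exp_remainder m (lam*K)" using assms by (simp add: exp_remainder_nonneg)
  ultimately show ?thesis using assms by simp
next
  case False
  then have pos: "0 < lam" "0 < t" using assms by auto
  have "(t/K)^m = (t/K) powr real m"
    using pos assms by (simp add: powr_realpow)
  also have "\<dots> \<le> (t/K) powr q"
    using assms by (intro powr_mono') auto
  finally have ratio: "(t/K)^m \<le> (t/K) powr q" .
  have "exp_remainder m (lam*t) \<le> (lam*t / (lam*K))^m * exp_remainder m (lam*K)"
    using assms pos by (intro exp_remainder_le_ratio_pow) auto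
  also have "\<dots> = (t/K)^m * exp_remainder m (lam*K)"
    using pos by simp
  also have "\<dots> \<le> (t/K) powr q * exp_remainder m (lam*K)"
    using ratio assms by (intro mult_right_mono exp_remainder_nonneg) auto
  also have "\<dots> = exp_remainder m (lam*K) / K powr q * t powr q"
    using assms by (simp add: powr_divide)
  finally show ?thesis .
qed

lemma bennett_phi_eq_taylor:
  assumes "2 \<le> m"
  shows "bennett_phi u = (\<Sum>k=2..m. u^k / fact k) + exp_remainder (Suc m) u"
proof -
  have "{..<Suc m} = insert 0 (insert 1 {2..m})" using assms by auto
  then show ?thesis unfolding bennett_phi_def exp_remainder_def by simp
qed

lemma bennett_phi_le_abs: "bennett_phi u \<le> bennett_phi \<bar>u\<bar>"
  using exp_remainder_le_abs[of 2 u]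
  by (simp add: bennett_phi_def exp_remainder_def numeral_2_eq_2)

lemma bennett_phi_le_ratio:
  assumes "0 \<le> a" "a \<le> b" "0 < b"
  shows "bennett_phi a \<le> (a/b) * bennett_phi b"
proof -
  have "exp ((1 - a/b) *\<^sub>R 0 + (a/b) *\<^sub>R b) \<le> (1 - a/b) * exp 0 + (a/b) * exp b"
    using assms by (intro convex_onD[OF exp_convex]) auto
  then have "exp a \<le> (1 - a/b) + (a/b) * exp b" using assms by simp
  moreover have "(a/b) * bennett_phi b = (a/b) * exp b - a/b - a"
    using assms by (simp add: bennett_phi_def field_simps)
  ultimately show ?thesis unfolding bennett_phi_def by linarith
qed

lemma powr_le_interpolate:
  fixes t c a b p :: real
  assumes "0 \<le> t" "0 < c" "a < b" "a \<le> p" "p \<le> b"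
  shows "t powr p \<le> (b - p)/(b - a) * (t powr a * c powr (p - a))
                  + (p - a)/(b - a) * (t powr b * c powr (p - b))"
proof (cases "t = 0")
  case False
  define w1 where "w1 = (b - p)/(b - a)"
  define w2 where "w2 = (p - a)/(b - a)"
  have "w1 + w2 = (b - a) / (b - a)"
    unfolding w1_def w2_def by (simp add: add_divide_distrib[symmetric])
  then have w: "0 \<le> w1" "0 \<le> w2" "w1 + w2 = 1"
    using assms by (simp_all add: w1_def w2_def)
  have "a * w1 + b * w2 = (a * (b - p) + b * (p - a)) / (b - a)"
    "(p - a) * w1 + (p - b) * w2 = ((p - a) * (b - p) + (p - b) * (p - a)) / (b - a)"
    unfolding w1_def w2_def by (simp_all add: add_divide_distrib)
  moreover have "a * (b - p) + b * (p - a) = p * (b - a)"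
    "(p - a) * (b - p) + (p - b) * (p - a) = 0"
    by algebra+
  ultimately have exps: "a * w1 + b * w2 = p" "(p - a) * w1 + (p - b) * w2 = 0"
    using assms by simp_all
  have "(t powr a * c powr (p - a)) powr w1 * (t powr b * c powr (p - b)) powr w2
        = t powr (a * w1 + b * w2) * c powr ((p - a) * w1 + (p - b) * w2)"
    using assms by (simp add: powr_mult powr_powr powr_add)
  also have "\<dots> = t powr p"
    unfolding exps using assms by simp
  finally show ?thesis
    using Youngs_inequality_0[OF w, of "t powr a * c powr (p - a)" "t powr b * c powr (p - b)"]
      assms False by (simp add: w1_def w2_def)
qed simp

lemma taylor_term_le_interpolate:
  fixes q c lam t :: real and k :: nat
  assumes "2 < q" "2 \<le> k" "real k \<le> q" "0 \<le> t" "0 < c" "0 \<le> lam"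
  shows "(lam*t)^k / fact k
    \<le> lam^k / fact k * ((q - k)/(q - 2) * c^(k-2)) * t^2
      + lam^k / fact k * ((real k - 2)/(q - 2) * c powr (k - q)) * t powr q"
proof -
  have "t^k = t powr real k"
    using assms by (simp add: powr_realpow')
  also have "\<dots> \<le> (q - k)/(q - 2) * (t powr 2 * c powr (real k - 2))
                  + (real k - 2)/(q - 2) * (t powr q * c powr (real k - q))"
    using assms by (intro powr_le_interpolate) auto
  also have "c powr (real k - 2) = c^(k-2)"
    using assms by (simp add: powr_realpow[symmetric] of_nat_diff)
  finally have "t^k \<le> (q - k)/(q - 2) * c^(k-2) * t^2 + (real k - 2)/(q - 2) * c powr (k - q) * t powr q"
    using assms by (simp add: mult_ac)
  then have "lam^k / fact k * t^k
      \<le> lam^k / fact k * ((q - k)/(q - 2) * c^(k-2) * t^2 + (real k - 2)/(q - 2) * c powr (k - q) * t powr q)"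
    using assms by (intro mult_left_mono) auto
  then show ?thesis
    by (simp add: power_mult_distrib algebra_simps)
qed

lemma taylor_term_moment_identity:
  fixes q s b c lam :: real and k :: nat
  assumes "2 < q" "2 \<le> k" "0 < s" "0 < c" "c powr (q - 2) = b / s"
  shows "lam^k / fact k * ((q - k)/(q - 2) * c^(k-2)) * s
       + lam^k / fact k * ((real k - 2)/(q - 2) * c powr (k - q)) * b
       = s / c^2 * ((lam*c)^k / fact k)"
proof -
  have "b = s * c powr (q - 2)"
    using assms by simp
  then have "c powr (k - q) * b = s * c powr (real k - 2)"
    by (simp add: mult.left_commute powr_add[symmetric])
  also have "\<dots> = s * c^(k-2)"
    using assms by (simp add: powr_realpow[symmetric] of_nat_diff)
  finally have bc: "c powr (k - q) * b = s * c^(k-2)" .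
  have w: "(q - k)/(q - 2) + (real k - 2)/(q - 2) = 1"
    using assms by (simp add: add_divide_distrib[symmetric])
  have ck: "c^k = c^2 * c^(k-2)"
    using assms by (metis le_add_diff_inverse power_add)
  have "lam^k / fact k * ((q - k)/(q - 2) * c^(k-2)) * s
       + lam^k / fact k * ((real k - 2)/(q - 2) * c powr (k - q)) * b
      = lam^k / fact k * ((q - k)/(q - 2) * c^(k-2)) * s
       + lam^k / fact k * ((real k - 2)/(q - 2) * (s * c^(k-2)))"
    by (simp only: mult.assoc bc)
  also have "\<dots> = lam^k / fact k * c^(k-2) * s * ((q - k)/(q - 2) + (real k - 2)/(q - 2))"
    by (simp only: distrib_left mult_ac)
  also have "\<dots> = s / c^2 * ((lam*c)^k / fact k)"
    unfolding w using assms by (simp add: ck power_mult_distrib)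
  finally show ?thesis .
qed

lemma bennett_phi_moment_split:
  fixes q s b c K lam :: real
  assumes q: "2 < q" and s: "0 < s" and K: "0 < K" and lam: "0 \<le> lam"
    and c: "0 < c" "c powr (q - 2) = b / s"
  obtains \<alpha> \<beta> where "0 \<le> \<alpha>" "0 \<le> \<beta>"
    "\<And>t. 0 \<le> t \<Longrightarrow> t \<le> K \<Longrightarrow> bennett_phi (lam*t) \<le> \<alpha> * t^2 + \<beta> * t powr q"
    "\<alpha> * s + \<beta> * b \<le> s / c^2 * bennett_phi (lam*c) + b / K powr q * bennett_phi (lam*K)"
proof -
  define m where "m = nat \<lfloor>q\<rfloor>"
  have m: "2 \<le> m" "q \<le> real (Suc m)" "\<And>k. k \<le> m \<Longrightarrow> real k \<le> q"
    using q by (auto simp: m_def) linarith+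
  define a where "a k = lam^k / fact k * ((q - k)/(q - 2) * c^(k-2))" for k :: nat
  define a' where "a' k = lam^k / fact k * ((real k - 2)/(q - 2) * c powr (k - q))" for k :: nat
  define r where "r = exp_remainder (Suc m) (lam*K) / K powr q"
  have "0 < s * c powr (q - 2)"
    using c(1) s by simp
  also have "s * c powr (q - 2) = b"
    using c s by simp
  finally have b: "0 < b" .
  have "0 \<le> a k" "0 \<le> a' k" if "k \<in> {2..m}" for k
    using that m(3)[of k] q c lam by (auto simp: a_def a'_def)
  moreover have "0 \<le> r"
    using K lam by (simp add: r_def exp_remainder_nonneg)
  ultimately have "0 \<le> sum a {2..m}" "0 \<le> sum a' {2..m} + r"
    by (auto intro!: sum_nonneg add_nonneg_nonneg)
  moreover have "bennett_phi (lam*t) \<le> sum a {2..m} * t^2 + (sum a' {2..m} + r) * t powr q"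
    if t: "0 \<le> t" "t \<le> K" for t
  proof -
    have "(\<Sum>k=2..m. (lam*t)^k / fact k) \<le> (\<Sum>k=2..m. a k * t^2 + a' k * t powr q)"
      using m(3) q c lam t unfolding a_def a'_def
      by (intro sum_mono taylor_term_le_interpolate) auto
    moreover have "exp_remainder (Suc m) (lam*t) \<le> r * t powr q"
      unfolding r_def using lam t K q m(2) by (intro exp_remainder_le_powr) auto
    moreover have "(\<Sum>k=2..m. a k * t^2 + a' k * t powr q) = sum a {2..m} * t^2 + sum a' {2..m} * t powr q"
      by (simp add: sum.distrib sum_distrib_right)
    ultimately show ?thesis
      unfolding bennett_phi_eq_taylor[OF m(1)] by (simp add: algebra_simps)
  qed
  moreover have "sum a {2..m} * s + (sum a' {2..m} + r) * b
      \<le> s / c^2 * bennett_phi (lam*c) + b / K powr q * bennett_phi (lam*K)"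
  proof -
    have "sum a {2..m} * s + sum a' {2..m} * b = s / c^2 * (\<Sum>k=2..m. (lam*c)^k / fact k)"
      using q c s unfolding a_def a'_def sum_distrib_left sum_distrib_right sum.distrib[symmetric]
      by (intro sum.cong refl taylor_term_moment_identity) auto
    also have "\<dots> \<le> s / c^2 * bennett_phi (lam*c)"
      using bennett_phi_eq_taylor[OF m(1), of "lam*c"] exp_remainder_nonneg[of "lam*c" "Suc m"] lam c s
      by (intro mult_left_mono) auto
    moreover have "r * b \<le> b / K powr q * bennett_phi (lam*K)"
    proof -
      have "0 \<le> (\<Sum>k=2..m. (lam*K)^k / fact k)"
        using lam K by (intro sum_nonneg) auto
      then have "exp_remainder (Suc m) (lam*K) \<le> bennett_phi (lam*K)"
        using bennett_phi_eq_taylor[OF m(1), of "lam*K"] by linarith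
      then show ?thesis
        using b K by (simp add: r_def divide_right_mono mult_left_mono)
    qed
    ultimately show ?thesis
      by (simp add: algebra_simps)
  qed
  ultimately show ?thesis
    using that by blast
qed

lemma Psi_has_real_derivative: "-1 < x \<Longrightarrow> (Psi has_real_derivative ln (1 + x)) (at x)"
  unfolding Psi_def[abs_def] by (auto intro!: derivative_eq_intros simp: field_simps)

lemma Psi_0 [simp]: "Psi 0 = 0"
  by (simp add: Psi_def)

lemma Psi_less:
  assumes "0 \<le> a" "a < b"
  shows "Psi a < Psi b"
proof -
  obtain x where x: "a < x" "x < b" "Psi b - Psi a = (b - a) * ln (1 + x)"
    using MVT2[OF assms(2), of Psi "\<lambda>x. ln (1 + x)"] assms Psi_has_real_derivative by force
  then have "0 < (b - a) * ln (1 + x)"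
    using assms by simp
  then show ?thesis
    using x by linarith
qed

lemma Psi_ex1:
  assumes "0 \<le> y"
  shows "\<exists>!x. 0 \<le> x \<and> Psi x = y"
proof -
  define b where "b = y + exp 2"
  have "2 \<le> ln (1 + b)"
    using assms by (simp add: b_def ln_ge_iff add_pos_nonneg)
  then have "(1 + b) * 2 \<le> (1 + b) * ln (1 + b)"
    using assms by (intro mult_left_mono) (auto simp: b_def)
  moreover have "y \<le> (1 + b) * 2 - b"
    using assms exp_gt_zero[of 2] by (simp add: b_def)
  ultimately have "y \<le> Psi b"
    unfolding Psi_def by linarith
  moreover have "Psi 0 \<le> y"
    using assms by simp
  moreover have "\<forall>x. 0 \<le> x \<and> x \<le> b \<longrightarrow> isCont Psi x"
    by (auto intro!: DERIV_isCont[OF Psi_has_real_derivative])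
  moreover have "0 \<le> b"
    using assms by (simp add: b_def add_nonneg_nonneg)
  ultimately obtain x where "0 \<le> x" "Psi x = y"
    using IVT[of Psi 0 y b] by auto
  moreover have "x' = x" if "0 \<le> x'" "Psi x' = y" for x'
    using Psi_less[of x x'] Psi_less[of x' x] that \<open>0 \<le> x\<close> \<open>Psi x = y\<close>
    by (cases x x' rule: linorder_cases) auto
  ultimately show ?thesis
    by blast
qed

lemma Psi_inv_nonneg: "0 \<le> y \<Longrightarrow> 0 \<le> Psi_inv y"
  and Psi_Psi_inv: "0 \<le> y \<Longrightarrow> Psi (Psi_inv y) = y"
  using theI'[OF Psi_ex1] unfolding Psi_inv_def by auto

lemma Psi_inv_pos: "0 < y \<Longrightarrow> 0 < Psi_inv y"
  using Psi_inv_nonneg[of y] Psi_Psi_inv[of y] by (cases "Psi_inv y = 0") auto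

lemma bennett_phi_Psi_inv_dual:
  fixes v c L :: real
  assumes "0 < v" "0 < c" "0 < L"
  obtains lam where "0 < lam"
    "v / c^2 * bennett_phi (lam*c) + L = lam * (v / c * Psi_inv (c^2 * L / v))"
proof
  \<comment> \<open>lam = ln (1 + y) / c maximises lam * (v/c) y - (v/c^2) phi(lam c) (Legendre duality of phi and Psi)\<close>
  define y where "y = Psi_inv (c^2 * L / v)"
  have y: "0 < y" "Psi y = c^2 * L / v"
    using assms by (simp_all add: y_def Psi_inv_pos Psi_Psi_inv)
  show "0 < ln (1 + y) / c"
    using y assms by simp
  have "exp (ln (1 + y) / c * c) = 1 + y" "L = v / c^2 * Psi y"
    using y assms by simp_all
  then show "v / c^2 * bennett_phi (ln (1 + y) / c * c) + L = ln (1 + y) / c * (v / c * y)"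
    using assms by (simp add: bennett_phi_def Psi_def field_simps power2_eq_square)
qed

lemma bennett_exponent_shrink_lam:
  fixes l l' v c L T :: real
  assumes "0 < l" "l \<le> l'" "0 \<le> v" "0 < c" "0 \<le> L"
    and "v / c^2 * bennett_phi (l'*c) + L = l' * T"
  shows "v / c^2 * bennett_phi (l*c) + l / l' * L \<le> l * T"
proof -
  have "bennett_phi (l*c) \<le> (l*c) / (l'*c) * bennett_phi (l'*c)"
    using assms by (intro bennett_phi_le_ratio) auto
  then have "v / c^2 * bennett_phi (l*c) \<le> v / c^2 * (l / l' * bennett_phi (l'*c))"
    using assms by (intro mult_left_mono) auto
  also have "\<dots> = l / l' * (v / c^2 * bennett_phi (l'*c))"
    by (simp only: mult.left_commute)
  also have "\<dots> = l / l' * (l' * T - L)"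
    by (simp add: assms(6)[symmetric])
  finally show ?thesis
    using assms by (simp add: algebra_simps)
qed

lemma bennett_phi_two_scales:
  fixes v1 c1 v2 c2 L :: real
  assumes "0 < v1" "0 < c1" "0 < v2" "0 < c2" "0 < L"
  obtains lam where "0 < lam"
    "v1 / c1^2 * bennett_phi (lam*c1) + v2 / c2^2 * bennett_phi (lam*c2) + L
       \<le> lam * (v1 / c1 * Psi_inv (c1^2 * L / v1) + v2 / c2 * Psi_inv (c2^2 * L / v2))"
proof -
  obtain l1 where l1: "0 < l1" "v1 / c1^2 * bennett_phi (l1*c1) + L = l1 * (v1 / c1 * Psi_inv (c1^2 * L / v1))"
    using bennett_phi_Psi_inv_dual[of v1 c1 L] assms by blast
  obtain l2 where l2: "0 < l2" "v2 / c2^2 * bennett_phi (l2*c2) + L = l2 * (v2 / c2 * Psi_inv (c2^2 * L / v2))"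
    using bennett_phi_Psi_inv_dual[of v2 c2 L] assms by blast
  define lam where "lam = min l1 l2"
  have "0 < lam"
    using l1 l2 by (simp add: lam_def)
  moreover have "v1 / c1^2 * bennett_phi (lam*c1) + lam / l1 * L \<le> lam * (v1 / c1 * Psi_inv (c1^2 * L / v1))"
    by (rule bennett_exponent_shrink_lam[OF _ _ _ _ _ l1(2)]) (use \<open>0 < lam\<close> assms in \<open>auto simp: lam_def\<close>)
  moreover have "v2 / c2^2 * bennett_phi (lam*c2) + lam / l2 * L \<le> lam * (v2 / c2 * Psi_inv (c2^2 * L / v2))"
    by (rule bennett_exponent_shrink_lam[OF _ _ _ _ _ l2(2)]) (use \<open>0 < lam\<close> assms in \<open>auto simp: lam_def\<close>)
  moreover have "L \<le> lam / l1 * L + lam / l2 * L"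
    using l1 l2 assms by (auto simp: lam_def min_def)
  ultimately show ?thesis
    using that[of lam] by (simp add: algebra_simps)
qed

lemma moment_scale_identities:
  fixes q \<sigma> B K :: real
  assumes q: "2 < q" and \<sigma>: "0 < \<sigma>" and B: "0 < B" and K: "0 < K"
  defines "c \<equiv> B * (B\<^sup>2 / \<sigma>\<^sup>2) powr (1 / (q - 2))"
    and "v \<equiv> B powr q / K powr (q - 2)"
  shows "0 < c" "c powr (q - 2) = B powr q / \<sigma>\<^sup>2"
    "\<sigma>\<^sup>2 / c = B * (\<sigma>\<^sup>2 / B\<^sup>2) powr ((q - 1) / (q - 2))"
    "c\<^sup>2 / \<sigma>\<^sup>2 = (B\<^sup>2 / \<sigma>\<^sup>2) powr (q / (q - 2))"
    "0 < v" "v / K = B powr q / K powr (q - 1)"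
    "K\<^sup>2 / v = (K / B) powr q" "v / K\<^sup>2 = B powr q / K powr q"
proof -
  have ln_eq: "x = y" if "0 < x" "0 < y" "ln x = ln y" for x y :: real
    using that by simp
  have p: "0 < q - 2" using q by simp
  show c: "0 < c" and v: "0 < v"
    using B \<sigma> K by (simp_all add: c_def v_def)
  have ln_c: "ln c = ln B + (2 * ln B - 2 * ln \<sigma>) / (q - 2)"
    using B \<sigma> by (simp add: c_def ln_mult ln_div ln_realpow)
  have ln_v: "ln v = q * ln B - (q - 2) * ln K"
    using B K by (simp add: v_def ln_div)
  show "c powr (q - 2) = B powr q / \<sigma>\<^sup>2" "\<sigma>\<^sup>2 / c = B * (\<sigma>\<^sup>2 / B\<^sup>2) powr ((q - 1) / (q - 2))"
    "c\<^sup>2 / \<sigma>\<^sup>2 = (B\<^sup>2 / \<sigma>\<^sup>2) powr (q / (q - 2))"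
    by (rule ln_eq; use c \<sigma> B ln_c p in \<open>simp_all add: ln_mult ln_div ln_realpow field_simps\<close>)+
  show "v / K = B powr q / K powr (q - 1)" "K\<^sup>2 / v = (K / B) powr q" "v / K\<^sup>2 = B powr q / K powr q"
    by (rule ln_eq; use v K B ln_v p in \<open>simp_all add: ln_mult ln_div ln_realpow field_simps\<close>)+
qed

lemma chernoff_parameters:
  fixes q \<sigma> B K L :: real
  assumes q: "2 < q" and \<sigma>: "0 < \<sigma>" and B: "0 < B" and K: "0 < K" and L: "0 < L"
  obtains lam \<alpha> \<beta> where "0 < lam" "0 \<le> \<alpha>" "0 \<le> \<beta>"
    "\<And>t. 0 \<le> t \<Longrightarrow> t \<le> K \<Longrightarrow> bennett_phi (lam*t) \<le> \<alpha> * t^2 + \<beta> * t powr q"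
    "\<alpha> * \<sigma>\<^sup>2 + \<beta> * B powr q + L
      \<le> lam * (B * (\<sigma>\<^sup>2 / B\<^sup>2) powr ((q - 1) / (q - 2)) * Psi_inv ((B\<^sup>2 / \<sigma>\<^sup>2) powr (q / (q - 2)) * L)
               + B powr q / K powr (q - 1) * Psi_inv ((K / B) powr q * L))"
proof -
  define c where "c = B * (B\<^sup>2 / \<sigma>\<^sup>2) powr (1 / (q - 2))"
  define v where "v = B powr q / K powr (q - 2)"
  note scale = moment_scale_identities[OF q \<sigma> B K, folded c_def v_def]
  obtain lam where lam: "0 < lam"
    "\<sigma>\<^sup>2 / c\<^sup>2 * bennett_phi (lam*c) + v / K\<^sup>2 * bennett_phi (lam*K) + L
       \<le> lam * (\<sigma>\<^sup>2 / c * Psi_inv (c\<^sup>2 * L / \<sigma>\<^sup>2) + v / K * Psi_inv (K\<^sup>2 * L / v))"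
    using bennett_phi_two_scales[of "\<sigma>\<^sup>2" c v K L] scale \<sigma> K L by auto
  obtain \<alpha> \<beta> where \<alpha>\<beta>: "0 \<le> \<alpha>" "0 \<le> \<beta>"
    "\<And>t. 0 \<le> t \<Longrightarrow> t \<le> K \<Longrightarrow> bennett_phi (lam*t) \<le> \<alpha> * t^2 + \<beta> * t powr q"
    "\<alpha> * \<sigma>\<^sup>2 + \<beta> * B powr q \<le> \<sigma>\<^sup>2 / c^2 * bennett_phi (lam*c) + B powr q / K powr q * bennett_phi (lam*K)"
    using bennett_phi_moment_split[of q "\<sigma>\<^sup>2" K lam c "B powr q"] q \<sigma> K lam(1) scale(1,2) by auto
  have "c\<^sup>2 * L / \<sigma>\<^sup>2 = (B\<^sup>2 / \<sigma>\<^sup>2) powr (q / (q - 2)) * L" "K\<^sup>2 * L / v = (K / B) powr q * L"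
    unfolding scale(4,7)[symmetric] by simp_all
  then have threshold: "\<sigma>\<^sup>2 / c * Psi_inv (c\<^sup>2 * L / \<sigma>\<^sup>2) + v / K * Psi_inv (K\<^sup>2 * L / v)
      = B * (\<sigma>\<^sup>2 / B\<^sup>2) powr ((q - 1) / (q - 2)) * Psi_inv ((B\<^sup>2 / \<sigma>\<^sup>2) powr (q / (q - 2)) * L)
        + B powr q / K powr (q - 1) * Psi_inv ((K / B) powr q * L)"
    unfolding scale(3,6) by simp
  show thesis
    using that[OF lam(1) \<alpha>\<beta>(1-3)] lam(2) \<alpha>\<beta>(4) unfolding threshold scale(8) by linarith
qed

lemma (in prob_space) expectation_exp_le_exp_moments:
  fixes X :: "'a \<Rightarrow> real"
  assumes [measurable]: "random_variable borel X"
    and mean: "expectation X = 0" and bound: "AE \<omega> in M. \<bar>X \<omega>\<bar> \<le> K"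
    and lam: "0 \<le> lam" and q: "0 \<le> q"
    and pointwise: "\<And>t. 0 \<le> t \<Longrightarrow> t \<le> K \<Longrightarrow> bennett_phi (lam*t) \<le> \<alpha> * t^2 + \<beta> * t powr q"
  shows "integrable M (\<lambda>\<omega>. exp (lam * X \<omega>))"
    and "expectation (\<lambda>\<omega>. exp (lam * X \<omega>))
           \<le> exp (\<alpha> * variance X + \<beta> * expectation (\<lambda>\<omega>. \<bar>X \<omega>\<bar> powr q))"
proof -
  have int_X: "integrable M X"
    by (rule integrable_const_bound[where B=K]) (use bound in auto)
  have int_sq: "integrable M (\<lambda>\<omega>. (X \<omega>)^2)"
    by (rule integrable_const_bound[where B="K^2"])
       (use bound in \<open>auto elim!: eventually_mono simp: abs_le_square_iff[symmetric]\<close>)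
  have int_pq: "integrable M (\<lambda>\<omega>. \<bar>X \<omega>\<bar> powr q)"
    by (rule integrable_const_bound[where B="K powr q"])
       (use bound q in \<open>auto elim!: eventually_mono intro: powr_mono2\<close>)
  show int_exp: "integrable M (\<lambda>\<omega>. exp (lam * X \<omega>))"
    by (rule integrable_const_bound[where B="exp (lam*K)"])
       (use bound lam in \<open>auto elim!: eventually_mono intro: mult_left_mono\<close>)
  have "AE \<omega> in M. exp (lam * X \<omega>) \<le> 1 + lam * X \<omega> + (\<alpha> * (X \<omega>)^2 + \<beta> * \<bar>X \<omega>\<bar> powr q)"
    using bound
  proof eventually_elim
    case (elim \<omega>)
    have "bennett_phi (lam * X \<omega>) \<le> bennett_phi (lam * \<bar>X \<omega>\<bar>)"
      using bennett_phi_le_abs[of "lam * X \<omega>"] lam by (simp add: abs_mult)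
    also have "\<dots> \<le> \<alpha> * \<bar>X \<omega>\<bar>^2 + \<beta> * \<bar>X \<omega>\<bar> powr q"
      using elim by (intro pointwise) auto
    finally show ?case
      by (simp add: bennett_phi_def)
  qed
  then have "expectation (\<lambda>\<omega>. exp (lam * X \<omega>))
      \<le> expectation (\<lambda>\<omega>. 1 + lam * X \<omega> + (\<alpha> * (X \<omega>)^2 + \<beta> * \<bar>X \<omega>\<bar> powr q))"
    by (intro integral_mono_AE int_exp) (use int_X int_sq int_pq in auto)
  also have "\<dots> = 1 + (\<alpha> * variance X + \<beta> * expectation (\<lambda>\<omega>. \<bar>X \<omega>\<bar> powr q))"
    using int_X int_sq int_pq mean by (simp add: prob_space)
  also have "\<dots> \<le> exp (\<alpha> * variance X + \<beta> * expectation (\<lambda>\<omega>. \<bar>X \<omega>\<bar> powr q))"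
    by (rule exp_ge_add_one_self)
  finally show "expectation (\<lambda>\<omega>. exp (lam * X \<omega>))
      \<le> exp (\<alpha> * variance X + \<beta> * expectation (\<lambda>\<omega>. \<bar>X \<omega>\<bar> powr q))" .
qed

lemma (in prob_space) prob_sum_ge_le_exp_mgf:
  fixes X :: "'i \<Rightarrow> 'a \<Rightarrow> real"
  assumes I: "finite I" and indep: "indep_vars (\<lambda>_. borel) X I"
    and int: "\<And>i. i \<in> I \<Longrightarrow> integrable M (\<lambda>\<omega>. exp (lam * X i \<omega>))" and lam: "0 \<le> lam"
  shows "prob {\<omega> \<in> space M. s \<le> (\<Sum>i\<in>I. X i \<omega>)}
           \<le> exp (- (lam * s)) * (\<Prod>i\<in>I. expectation (\<lambda>\<omega>. exp (lam * X i \<omega>)))"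
proof -
  have [measurable]: "X i \<in> borel_measurable M" if "i \<in> I" for i
    using indep that by (auto simp: indep_vars_def)
  define Y where "Y = (\<lambda>i \<omega>. exp (lam * X i \<omega>))"
  have indep_Y: "indep_vars (\<lambda>_. borel) Y I"
    unfolding Y_def by (rule indep_vars_compose2[OF indep]) measurable
  have int_Y: "integrable M (Y i)" if "i \<in> I" for i
    using int[OF that] by (simp add: Y_def)
  have prod_Y: "(\<Prod>i\<in>I. Y i \<omega>) = exp (lam * (\<Sum>i\<in>I. X i \<omega>))" for \<omega>
    unfolding Y_def by (simp add: exp_sum[OF I] sum_distrib_left)
  have "prob {\<omega> \<in> space M. s \<le> (\<Sum>i\<in>I. X i \<omega>)}
      \<le> prob {\<omega> \<in> space M. exp (lam * s) \<le> (\<Prod>i\<in>I. Y i \<omega>)}"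
    unfolding prod_Y using lam I by (intro finite_measure_mono) (auto intro: mult_left_mono)
  also have "\<dots> \<le> expectation (\<lambda>\<omega>. \<Prod>i\<in>I. Y i \<omega>) / exp (lam * s)"
    using indep_vars_integrable[OF I indep_Y int_Y]
    by (intro integral_Markov_inequality_measure[where A="space M"])
       (auto simp: Y_def intro!: prod_nonneg)
  also have "\<dots> = exp (- (lam * s)) * (\<Prod>i\<in>I. expectation (Y i))"
    by (simp add: indep_vars_lebesgue_integral[OF I indep_Y int_Y] exp_minus field_simps)
  finally show ?thesis
    by (simp add: Y_def)
qed

lemma (in prob_space) prob_mean_ge_le_exp_moments:
  fixes X :: "nat \<Rightarrow> 'a \<Rightarrow> real" and n :: nat
  assumes n: "1 \<le> n" and indep: "indep_vars (\<lambda>_. borel) X {1..n}"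
    and mean: "\<And>i. i \<in> {1..n} \<Longrightarrow> expectation (X i) = 0"
    and var: "(1 / real n) * (\<Sum>i=1..n. variance (X i)) \<le> s"
    and mom: "(1 / real n) * (\<Sum>i=1..n. expectation (\<lambda>\<omega>. \<bar>X i \<omega>\<bar> powr q)) \<le> b"
    and bound: "AE \<omega> in M. \<forall>i\<in>{1..n}. \<bar>X i \<omega>\<bar> \<le> K"
    and lam: "0 \<le> lam" and q: "0 \<le> q" and \<alpha>: "0 \<le> \<alpha>" and \<beta>: "0 \<le> \<beta>"
    and pointwise: "\<And>t. 0 \<le> t \<Longrightarrow> t \<le> K \<Longrightarrow> bennett_phi (lam*t) \<le> \<alpha> * t^2 + \<beta> * t powr q"
  shows "prob {\<omega> \<in> space M. t \<le> (1 / real n) * (\<Sum>i=1..n. X i \<omega>)}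
           \<le> exp (- (real n * (lam * t - (\<alpha> * s + \<beta> * b))))"
proof -
  have rv: "random_variable borel (X i)" if "i \<in> {1..n}" for i
    using indep that by (auto simp: indep_vars_def)
  have bound_i: "AE \<omega> in M. \<bar>X i \<omega>\<bar> \<le> K" if "i \<in> {1..n}" for i
    using bound by eventually_elim (use that in auto)
  note mgf = expectation_exp_le_exp_moments[OF rv mean bound_i lam q pointwise]
  define m where "m i = \<alpha> * variance (X i) + \<beta> * expectation (\<lambda>\<omega>. \<bar>X i \<omega>\<bar> powr q)" for i
  have "(\<Sum>i=1..n. m i) = \<alpha> * (\<Sum>i=1..n. variance (X i)) + \<beta> * (\<Sum>i=1..n. expectation (\<lambda>\<omega>. \<bar>X i \<omega>\<bar> powr q))"
    by (simp add: m_def sum.distrib sum_distrib_left)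
  also have "\<dots> \<le> \<alpha> * (real n * s) + \<beta> * (real n * b)"
  proof -
    have "(\<Sum>i=1..n. variance (X i)) \<le> real n * s" "(\<Sum>i=1..n. expectation (\<lambda>\<omega>. \<bar>X i \<omega>\<bar> powr q)) \<le> real n * b"
      using var mom n by (simp_all add: field_simps)
    then show ?thesis
      using \<alpha> \<beta> by (intro add_mono mult_left_mono)
  qed
  finally have sum_m: "(\<Sum>i=1..n. m i) \<le> real n * (\<alpha> * s + \<beta> * b)"
    by (simp add: algebra_simps)
  have "{\<omega> \<in> space M. t \<le> (1 / real n) * (\<Sum>i=1..n. X i \<omega>)}
      = {\<omega> \<in> space M. real n * t \<le> (\<Sum>i=1..n. X i \<omega>)}"
    using n by (auto simp: field_simps)
  then have "prob {\<omega> \<in> space M. t \<le> (1 / real n) * (\<Sum>i=1..n. X i \<omega>)}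
      \<le> exp (- (lam * (real n * t))) * (\<Prod>i=1..n. expectation (\<lambda>\<omega>. exp (lam * X i \<omega>)))"
    using prob_sum_ge_le_exp_mgf[OF _ indep mgf(1) lam] by simp
  also have "\<dots> \<le> exp (- (lam * (real n * t))) * (\<Prod>i=1..n. exp (m i))"
    using mgf by (intro mult_left_mono prod_mono) (auto simp: m_def)
  also have "\<dots> = exp (- (lam * (real n * t)) + (\<Sum>i=1..n. m i))"
    by (simp add: exp_sum[symmetric] flip: exp_add)
  also have "\<dots> \<le> exp (- (real n * (lam * t - (\<alpha> * s + \<beta> * b))))"
    using sum_m by (simp add: algebra_simps)
  finally show ?thesis .
qed

theorem theorem4p1:
  fixes M :: "'a measure" and X :: "nat \<Rightarrow> 'a \<Rightarrow> real"
    and n :: nat and q \<sigma> B K z :: real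
  assumes "prob_space M"
    and "n \<ge> 1"
    and "q > 2" and "\<sigma> > 0" and "B > 0" and "K > 0"
    and "\<And>i. i \<in> {1..n} \<Longrightarrow> X i \<in> borel_measurable M"
    and "prob_space.indep_vars M (\<lambda>_. borel) X {1..n}"
    and "\<And>i. i \<in> {1..n} \<Longrightarrow> integrable M (X i)"
    and "\<And>i. i \<in> {1..n} \<Longrightarrow> prob_space.expectation M (X i) = 0"
    and "(1 / real n) * (\<Sum>i=1..n. prob_space.variance M (X i)) \<le> \<sigma>\<^sup>2"
    and "(1 / real n) * (\<Sum>i=1..n. prob_space.expectation M (\<lambda>\<omega>. \<bar>X i \<omega>\<bar> powr q)) \<le> B powr q"
    and "AE \<omega> in M. (\<forall>i\<in>{1..n}. \<bar>X i \<omega>\<bar> \<le> K)"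
    and "z > 1"
  shows "prob_space.prob M {\<omega> \<in> space M.
           (1 / real n) * (\<Sum>i=1..n. X i \<omega>) \<ge>
             B * (\<sigma>\<^sup>2 / B\<^sup>2) powr ((q - 1) / (q - 2))
               * Psi_inv ((B\<^sup>2 / \<sigma>\<^sup>2) powr (q / (q - 2)) * (ln z / real n))
             + B powr q / K powr (q - 1) * Psi_inv ((K / B) powr q * (ln z / real n))}
         \<le> 1 / z"
proof -
  interpret prob_space M by fact
  define L where "L = ln z / real n"
  have "0 < L"
    using assms(2,14) by (simp add: L_def)
  then obtain lam \<alpha> \<beta> where lam: "0 < lam" and \<alpha>\<beta>: "0 \<le> \<alpha>" "0 \<le> \<beta>"
    "\<And>t. 0 \<le> t \<Longrightarrow> t \<le> K \<Longrightarrow> bennett_phi (lam*t) \<le> \<alpha> * t^2 + \<beta> * t powr q"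
    and exponent: "\<alpha> * \<sigma>\<^sup>2 + \<beta> * B powr q + L
      \<le> lam * (B * (\<sigma>\<^sup>2 / B\<^sup>2) powr ((q - 1) / (q - 2)) * Psi_inv ((B\<^sup>2 / \<sigma>\<^sup>2) powr (q / (q - 2)) * L)
               + B powr q / K powr (q - 1) * Psi_inv ((K / B) powr q * L))"
    using chernoff_parameters[OF assms(3-6)] by blast
  define t where "t = B * (\<sigma>\<^sup>2 / B\<^sup>2) powr ((q - 1) / (q - 2)) * Psi_inv ((B\<^sup>2 / \<sigma>\<^sup>2) powr (q / (q - 2)) * L)
    + B powr q / K powr (q - 1) * Psi_inv ((K / B) powr q * L)"
  have "real n * L \<le> real n * (lam * t - (\<alpha> * \<sigma>\<^sup>2 + \<beta> * B powr q))"
    using exponent by (intro mult_left_mono) (auto simp: t_def)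
  moreover have "prob {\<omega> \<in> space M. t \<le> (1 / real n) * (\<Sum>i=1..n. X i \<omega>)}
      \<le> exp (- (real n * (lam * t - (\<alpha> * \<sigma>\<^sup>2 + \<beta> * B powr q))))"
    using lam assms(3) by (intro prob_mean_ge_le_exp_moments[OF assms(2,8,10-13) _ _ \<alpha>\<beta>]) auto
  ultimately have "prob {\<omega> \<in> space M. t \<le> (1 / real n) * (\<Sum>i=1..n. X i \<omega>)} \<le> exp (- (real n * L))"
    by (meson exp_le_cancel_iff neg_le_iff_le order.trans)
  also have "\<dots> = 1 / z"
    using assms(2,14) by (simp add: L_def exp_minus inverse_eq_divide)
  finally show ?thesis
    unfolding t_def L_def .
qed

end
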